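(* Let $F = \bigwedge_{i\in[c]} C_i$ be a 3-SAT formula over the $p$ variables $x_1,\dots,x_p$ with clauses $C_1,\dots,C_c$, and let $A$ be a partial assignment on these variables, where clauses and partial assignments are viewed as elements of $\mathcal{B}$. Then: 1. (Satisfiability checking) $A \models F$ if and only if $\min_{i\in[c]} E(C_i)\cdot E(A) \ge 1$. 2. (Conflict detection) $F \models \lnot A$ if and only if $\min_{i\in[c]} E(C_i)\cdot E_{\text{not-false}}(A) = 0$. 3. (Deduction) Let $D := \{\ell \in L \mid F\land A \models_1 \ell\}$. Then $$E(D) = \max\Big[\min\Big(\sum_{i\in[c]} E(C_i)\,\mathbf{1}_{\{E(C_i)\cdot E_{\text{not-false}}(A) = 1\}},\ 1\Big) - E_{\text{assigned}}(A),\ 0\Big],$$ where $\max$ and $\min$ are applied elementwise.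
   Context: Literals: $L = \{x_1,\lnot x_1,\dots,x_p,\lnot x_p\}$. $\mathcal{B}$ is the set of subsets of $L$ that do not contain both $x_v$ and $\lnot x_v$ for any $v$. A clause $C\in\mathcal{B}$ denotes the disjunction of its literals; a partial assignment $A\in\mathcal{B}$ sets $x_v$ true if $x_v\in A$, false if $\lnot x_v\in A$, and leaves $x_v$ unassigned otherwise. A 3-SAT formula is a conjunction of clauses each with at most 3 literals. Encodings $E, E_{\text{not-false}}, E_{\text{assigned}}: \mathcal{B}\to\mathbb{R}^{2p}$: for $v\in[p]$, $E(B)_v = \mathbf{1}_{x_v\in B}$, $E(B)_{v+p} = \mathbf{1}_{\lnot x_v\in B}$; $E_{\text{not-false}}(B)_v = \mathbf{1}_{\lnot x_v\notin B}$, $E_{\text{not-false}}(B)_{v+p} = \mathbf{1}_{x_v\notin B}$; $E_{\text{assigned}}(B)_v = E_{\text{assigned}}(B)_{v+p} = \mathbf{1}_{x_v\in B \text{ or } \lnot x_v\in B}$. $A\models F$ means every clause $C_i$ contains a literal belonging to $A$. A literal is forced false by $A$ if its negation belongs to $A$. $F\models\lnot A$ means some clause $C_i$ has all of its literals forced false by $A$. $F\land A\models_1 \ell$ (unit propagation) means there is a clause $C_i$ that is not satisfied by $A$ (contains no literal of $A$) and, after deleting from $C_i$ all literals forced false by $A$, the remaining clause is exactly $\{\ell\}$. For a set $D\subseteq L$, $E(D)$ is defined by the same formula as for $\mathcal{B}$. *)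

theory Defs
  imports Complex_Main "HOL-Library.Extended_Real"
begin

text \<open>Literals over variables indexed 0..p-1 (variable x_(v+1) of the paper is index v).\<close>
datatype lit = Pos nat | Neg nat

fun neg :: "lit \<Rightarrow> lit" where
  "neg (Pos v) = Neg v"
| "neg (Neg v) = Pos v"

definition Lits :: "nat \<Rightarrow> lit set" where
  "Lits p = {Pos v | v. v < p} \<union> {Neg v | v. v < p}"

definition BB :: "nat \<Rightarrow> lit set set" where
  "BB p = {S. S \<subseteq> Lits p \<and> (\<forall>v. \<not> (Pos v \<in> S \<and> Neg v \<in> S))}"

text \<open>Vectors in R^(2p) as functions nat => real; only indices < 2p are meaningful.
  Index v (v<p) corresponds to coordinate v+1 of the paper, index v+p to coordinate v+p+1.\<close>
definition Enc :: "nat \<Rightarrow> lit set \<Rightarrow> nat \<Rightarrow> real" where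
  "Enc p S i = (if i < p then (if Pos i \<in> S then 1 else 0)
               else if i < 2*p then (if Neg (i - p) \<in> S then 1 else 0) else 0)"

definition Enc_nf :: "nat \<Rightarrow> lit set \<Rightarrow> nat \<Rightarrow> real" where
  "Enc_nf p S i = (if i < p then (if Neg i \<notin> S then 1 else 0)
               else if i < 2*p then (if Pos (i - p) \<notin> S then 1 else 0) else 0)"

definition Enc_as :: "nat \<Rightarrow> lit set \<Rightarrow> nat \<Rightarrow> real" where
  "Enc_as p S i = (if i < p then (if Pos i \<in> S \<or> Neg i \<in> S then 1 else 0)
               else if i < 2*p then (if Pos (i - p) \<in> S \<or> Neg (i - p) \<in> S then 1 else 0) else 0)"

definition dotp :: "nat \<Rightarrow> (nat \<Rightarrow> real) \<Rightarrow> (nat \<Rightarrow> real) \<Rightarrow> real" where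
  "dotp p u w = (\<Sum>i<2*p. u i * w i)"

definition sat :: "lit set \<Rightarrow> nat \<Rightarrow> (nat \<Rightarrow> lit set) \<Rightarrow> bool" where
  "sat A c C = (\<forall>i<c. \<exists>l\<in>C i. l \<in> A)"

definition forced_false :: "lit set \<Rightarrow> lit \<Rightarrow> bool" where
  "forced_false A l = (neg l \<in> A)"

definition entails_negA :: "nat \<Rightarrow> (nat \<Rightarrow> lit set) \<Rightarrow> lit set \<Rightarrow> bool" where
  "entails_negA c C A = (\<exists>i<c. \<forall>l\<in>C i. forced_false A l)"

definition unit_prop :: "nat \<Rightarrow> (nat \<Rightarrow> lit set) \<Rightarrow> lit set \<Rightarrow> lit \<Rightarrow> bool" where
  "unit_prop c C A l = (\<exists>i<c. (\<forall>m\<in>C i. m \<notin> A) \<and> {m \<in> C i. \<not> forced_false A m} = {l})"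

end

theory Submission
  imports Defs
begin

text \<open>Index i < 2p of the encodings stands for the literal lit_of p i; with this reading
  every dot product with E(S) becomes a sum over the literals of S, so each of the three
  quantities of the theorem is a count of literals of a clause: those true under A (zero iff
  the clause is unsatisfied), those not forced false by A (zero iff the clause is falsified,
  one iff it is a unit clause under A). Clipping the column sums at 1 turns "some unit clause
  contains l" into an indicator, and subtracting E_assigned(A) removes the literals whose
  variable is already assigned, which can never be propagated.\<close>

definition lit_of :: "nat \<Rightarrow> nat \<Rightarrow> lit" where
  "lit_of p i = (if i < p then Pos i else Neg (i - p))"

lemma lit_of_bij: "bij_betw (lit_of p) {..<2*p} (Lits p)"
proof -
  have "inj_on (lit_of p) {..<2*p}"
    by (auto simp: inj_on_def lit_of_def split: if_splits)
  moreover have "Lits p \<subseteq> lit_of p ` {..<2*p}"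
  proof
    fix l assume "l \<in> Lits p"
    then obtain v where "v < p" "l = Pos v \<or> l = Neg v" by (auto simp: Lits_def)
    then have "l = lit_of p v \<or> l = lit_of p (v + p)" by (auto simp: lit_of_def)
    then show "l \<in> lit_of p ` {..<2*p}" using \<open>v < p\<close> by auto
  qed
  moreover have "lit_of p ` {..<2*p} \<subseteq> Lits p" by (auto simp: lit_of_def Lits_def)
  ultimately show ?thesis by (auto simp: bij_betw_def)
qed

lemma lit_of_in_Lits: "i < 2*p \<Longrightarrow> lit_of p i \<in> Lits p"
  using lit_of_bij by (auto simp: bij_betw_def)

lemma finite_Lits: "finite (Lits p)"
  using bij_betw_finite[OF lit_of_bij] by simp

lemma BB_neg_notin: "A \<in> BB p \<Longrightarrow> m \<in> A \<Longrightarrow> neg m \<notin> A"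
  by (cases m) (auto simp: BB_def)

lemma Enc_lit_of: "i < 2*p \<Longrightarrow> Enc p S i = (if lit_of p i \<in> S then 1 else 0)"
  by (simp add: Enc_def lit_of_def)

lemma Enc_nf_lit_of:
  "i < 2*p \<Longrightarrow> Enc_nf p S i = (if \<not> forced_false S (lit_of p i) then 1 else 0)"
  by (simp add: Enc_nf_def lit_of_def forced_false_def)

lemma Enc_as_lit_of:
  "i < 2*p \<Longrightarrow> Enc_as p S i = (if lit_of p i \<in> S \<or> neg (lit_of p i) \<in> S then 1 else 0)"
  by (auto simp: Enc_as_def lit_of_def)

lemma dotp_Enc:
  assumes "S \<subseteq> Lits p" and "\<forall>i<2*p. w i = g (lit_of p i)"
  shows "dotp p (Enc p S) w = (\<Sum>l\<in>S. g l)"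
proof -
  have "dotp p (Enc p S) w = (\<Sum>i<2*p. if lit_of p i \<in> S then g (lit_of p i) else 0)"
    unfolding dotp_def using assms(2) by (intro sum.cong) (auto simp: Enc_lit_of)
  also have "\<dots> = (\<Sum>l\<in>Lits p. if l \<in> S then g l else 0)"
    by (rule sum.reindex_bij_betw[OF lit_of_bij])
  also have "\<dots> = (\<Sum>l\<in>S. g l)"
    using assms(1) finite_Lits by (simp add: sum.inter_restrict[symmetric] Int_absorb1)
  finally show ?thesis .
qed

lemma dotp_Enc_indicator:
  assumes "S \<subseteq> Lits p" and "\<forall>i<2*p. w i = (if P (lit_of p i) then 1 else 0)"
  shows "dotp p (Enc p S) w = real (card {l\<in>S. P l})"
proof -
  have "finite S" using assms(1) finite_Lits finite_subset by blast
  then show ?thesis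
    using dotp_Enc[OF assms] by (simp add: sum.inter_filter[symmetric])
qed

lemma dotp_Enc_Enc: "S \<subseteq> Lits p \<Longrightarrow> dotp p (Enc p S) (Enc p A) = real (card {l\<in>S. l \<in> A})"
  by (rule dotp_Enc_indicator) (simp_all add: Enc_lit_of)

lemma dotp_Enc_Enc_nf:
  "S \<subseteq> Lits p \<Longrightarrow> dotp p (Enc p S) (Enc_nf p A) = real (card {l\<in>S. \<not> forced_false A l})"
  by (rule dotp_Enc_indicator) (simp_all add: Enc_nf_lit_of)

lemma INF_ereal_of_nat_ge_1_iff:
  "(INF i\<in>I. ereal (real (f i))) \<ge> 1 \<longleftrightarrow> (\<forall>i\<in>I. f i \<noteq> (0::nat))"
  by (auto simp: le_INF_iff Suc_le_eq)

lemma INF_ereal_of_nat_eq_0_iff: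
  "(INF i\<in>I. ereal (real (f i))) = 0 \<longleftrightarrow> (\<exists>i\<in>I. f i = (0::nat))"
proof
  assume "(INF i\<in>I. ereal (real (f i))) = 0"
  then have "\<not> (INF i\<in>I. ereal (real (f i))) \<ge> 1" by simp
  then show "\<exists>i\<in>I. f i = 0" unfolding INF_ereal_of_nat_ge_1_iff by auto
next
  assume "\<exists>i\<in>I. f i = 0"
  then obtain j where "j \<in> I" "f j = 0" by blast
  then have "(INF i\<in>I. ereal (real (f i))) \<le> 0"
    using INF_lower[of j I "\<lambda>i. ereal (real (f i))"] by (simp add: zero_ereal_def)
  moreover have "0 \<le> (INF i\<in>I. ereal (real (f i)))"
    by (rule INF_greatest) simp
  ultimately show "(INF i\<in>I. ereal (real (f i))) = 0" by (rule antisym)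
qed

lemma min_sum_indicator_1:
  assumes "finite I"
  shows "min (\<Sum>i\<in>I. if P i then 1 else 0 :: real) 1 = (if \<exists>i\<in>I. P i then 1 else 0)"
proof (cases "\<exists>i\<in>I. P i")
  case True
  then obtain j where "j \<in> I" "P j" by blast
  then have "(if P j then 1 else 0) \<le> (\<Sum>i\<in>I. if P i then 1 else 0 :: real)"
    using assms by (intro member_le_sum) auto
  then show ?thesis using True \<open>P j\<close> by simp
qed simp

lemma sat_iff_card:
  "\<forall>i<c. finite (C i) \<Longrightarrow> sat A c C \<longleftrightarrow> (\<forall>i<c. card {l\<in>C i. l \<in> A} \<noteq> 0)"
  by (auto simp: sat_def)

lemma entails_negA_iff_card:
  "\<forall>i<c. finite (C i) \<Longrightarrow>
    entails_negA c C A \<longleftrightarrow> (\<exists>i<c. card {l\<in>C i. \<not> forced_false A l} = 0)"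
  by (auto simp: entails_negA_def)

lemma not_unit_prop_assigned: "l \<in> A \<or> neg l \<in> A \<Longrightarrow> \<not> unit_prop c C A l"
  by (auto simp: unit_prop_def forced_false_def)

lemma unit_prop_unassigned_iff:
  assumes consistent: "\<forall>m\<in>A. neg m \<notin> A" and "l \<notin> A" "neg l \<notin> A"
  shows "unit_prop c C A l \<longleftrightarrow> (\<exists>i<c. l \<in> C i \<and> card {m\<in>C i. \<not> forced_false A m} = 1)"
proof
  assume "unit_prop c C A l"
  then show "\<exists>i<c. l \<in> C i \<and> card {m\<in>C i. \<not> forced_false A m} = 1"
    by (force simp: unit_prop_def)
next
  assume "\<exists>i<c. l \<in> C i \<and> card {m\<in>C i. \<not> forced_false A m} = 1"
  then obtain i where "i < c" "l \<in> C i" and "card {m\<in>C i. \<not> forced_false A m} = 1" by blast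
  moreover have "l \<in> {m\<in>C i. \<not> forced_false A m}"
    using \<open>l \<in> C i\<close> \<open>neg l \<notin> A\<close> by (simp add: forced_false_def)
  ultimately have unit: "{m\<in>C i. \<not> forced_false A m} = {l}"
    by (metis card_1_singletonE singletonD)
  txt \<open>A true literal is never forced false, so it would be a second unfalsified one.\<close>
  have "\<forall>m\<in>C i. m \<notin> A"
    using unit consistent \<open>l \<notin> A\<close> by (auto simp: forced_false_def)
  with unit \<open>i < c\<close> show "unit_prop c C A l" by (auto simp: unit_prop_def)
qed

lemma unit_prop_indicator:
  assumes consistent: "\<forall>m\<in>A. neg m \<notin> A"
  shows "(if unit_prop c C A l then 1 else 0) =
    max (min (\<Sum>i<c. if l \<in> C i \<and> card {m\<in>C i. \<not> forced_false A m} = 1 then 1 else 0) 1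
         - (if l \<in> A \<or> neg l \<in> A then 1 else 0)) (0::real)"
  using not_unit_prop_assigned[of l A c C] unit_prop_unassigned_iff[OF consistent, of l c C]
  by (cases "l \<in> A \<or> neg l \<in> A") (auto simp: min_sum_indicator_1 lessThan_iff)

theorem mainTheorem2:
  fixes p c :: nat and C :: "nat \<Rightarrow> lit set" and A :: "lit set"
  assumes clauses: "\<forall>i<c. C i \<in> BB p \<and> card (C i) \<le> 3"
    and assignment: "A \<in> BB p"
  shows "(sat A c C \<longleftrightarrow> (INF i\<in>{..<c}. ereal (dotp p (Enc p (C i)) (Enc p A))) \<ge> 1)
       \<and> (entails_negA c C A \<longleftrightarrow> (INF i\<in>{..<c}. ereal (dotp p (Enc p (C i)) (Enc_nf p A))) = 0)
       \<and> (\<forall>k<2*p. Enc p {l \<in> Lits p. unit_prop c C A l} k =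
           max (min (\<Sum>i<c. Enc p (C i) k *
                      (if dotp p (Enc p (C i)) (Enc_nf p A) = 1 then 1 else 0)) 1
                - Enc_as p A k) 0)"
proof (intro conjI allI impI)
  have sub: "\<forall>i<c. C i \<subseteq> Lits p" using clauses by (auto simp: BB_def)
  then have fin: "\<forall>i<c. finite (C i)" using finite_Lits finite_subset by blast
  show "sat A c C \<longleftrightarrow> (INF i\<in>{..<c}. ereal (dotp p (Enc p (C i)) (Enc p A))) \<ge> 1"
    using sub by (simp add: dotp_Enc_Enc INF_ereal_of_nat_ge_1_iff sat_iff_card[OF fin] Ball_def)
  show "entails_negA c C A \<longleftrightarrow> (INF i\<in>{..<c}. ereal (dotp p (Enc p (C i)) (Enc_nf p A))) = 0"
    using sub by (simp add: dotp_Enc_Enc_nf INF_ereal_of_nat_eq_0_iff entails_negA_iff_card[OF fin] Bex_def)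
  fix k assume "k < 2*p"
  have consistent: "\<forall>m\<in>A. neg m \<notin> A" using assignment BB_neg_notin by blast
  have "(\<Sum>i<c. Enc p (C i) k * (if dotp p (Enc p (C i)) (Enc_nf p A) = 1 then 1 else 0)) =
    (\<Sum>i<c. if lit_of p k \<in> C i \<and> card {m\<in>C i. \<not> forced_false A m} = 1 then 1 else 0)"
    using sub \<open>k < 2*p\<close> by (intro sum.cong) (auto simp: Enc_lit_of dotp_Enc_Enc_nf)
  then show "Enc p {l \<in> Lits p. unit_prop c C A l} k =
           max (min (\<Sum>i<c. Enc p (C i) k *
                      (if dotp p (Enc p (C i)) (Enc_nf p A) = 1 then 1 else 0)) 1
                - Enc_as p A k) 0"
    using \<open>k < 2*p\<close> lit_of_in_Lits unit_prop_indicator[OF consistent, of c C "lit_of p k"]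
    by (simp add: Enc_lit_of Enc_as_lit_of)
qed

end
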